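(* Let $A\in\mathbb{R}^{m\times n}$, $L\in\mathbb{R}^{p\times n}$ with $\mathcal{N}(A)\cap\mathcal{N}(L)=\{0\}$, let $b\in\mathbb{R}^m$ and $\mu>0$. Let $\tilde V_1\in\mathbb{R}^{n\times l}$ have orthonormal columns, and set $\widehat A = A\tilde V_1$, $\widehat L = L\tilde V_1$. Suppose the matrix pair $(\widehat A,\widehat L)$ has a generalized SVD $$\widehat A = \widehat U \widehat C \widehat G^{-1},\qquad \widehat L = \widehat V\widehat S\widehat G^{-1},$$ where $\widehat U\in\mathbb{R}^{m\times l}$ and $\widehat V\in\mathbb{R}^{p\times l}$ have orthonormal columns, $\widehat C,\widehat S\in\mathbb{R}^{l\times l}$ are diagonal with nonnegative entries and $\widehat C^T\widehat C+\widehat S^T\widehat S=I$, and $\widehat G\in\mathbb{R}^{l\times l}$ is nonsingular. Define $$\widetilde A = A\tilde V_1\tilde V_1^T,\qquad \widetilde L = L\tilde V_1\tilde V_1^T.$$ Then the vector $$\tilde V_1 \widehat G(\widehat C^T\widehat C+\mu^2\widehat S^T\widehat S)^{-1}\widehat C^T\widehat U^T b$$ is the least-squares solution with minimum norm of $$\min_{x\in\mathbb{R}^n}\|\widetilde A x - b\|^2+\mu^2\|\widetilde L x\|^2,$$ i.e. the minimizer of this problem having minimal Euclidean norm.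
   Context: All norms are Euclidean 2-norms; $\mathcal{N}(M)$ denotes the null space of a matrix $M$. In the paper, $\tilde V_1$ is typically obtained as the approximate right singular vectors of $A$ from a randomized SVD, but the statement holds for any $\tilde V_1$ with orthonormal columns. *)

theory Defs
  imports "HOL-Analysis.Analysis"
begin

definition orthonormal_cols :: "real^'l^'k \<Rightarrow> bool" where
  "orthonormal_cols Q \<longleftrightarrow> transpose Q ** Q = mat 1"

definition nonneg_diag :: "real^'l^'l \<Rightarrow> bool" where
  "nonneg_diag D \<longleftrightarrow> (\<forall>i j. i \<noteq> j \<longrightarrow> D $ i $ j = 0) \<and> (\<forall>i. D $ i $ i \<ge> 0)"

definition min_norm_minimizer :: "('a::real_normed_vector \<Rightarrow> real) \<Rightarrow> 'a \<Rightarrow> bool" where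
  "min_norm_minimizer J x \<longleftrightarrow>
     (\<forall>z. J x \<le> J z) \<and> (\<forall>y. (\<forall>z. J y \<le> J z) \<longrightarrow> norm x \<le> norm y)"

end

theory Submission
  imports Defs
begin

text \<open>
  Since \<open>A V\<^sub>1 V\<^sub>1\<^sup>T x = U C G\<^sup>-\<^sup>1 V\<^sub>1\<^sup>T x\<close> (and likewise for \<open>L\<close>), the objective depends on \<open>x\<close> only
  through \<open>z = G\<^sup>-\<^sup>1 V\<^sub>1\<^sup>T x\<close>, and as a function of \<open>z\<close> it is the Tikhonov functional of the pair
  \<open>(U C, V S)\<close>. Its normal matrix \<open>C\<^sup>T C + \<mu>\<^sup>2 S\<^sup>T S\<close> is positive definite because
  \<open>C\<^sup>T C + S\<^sup>T S = I\<close>, so the normal equations have exactly one solution \<open>z\<^sub>0\<close>, which is the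
  unique minimizer. Hence the minimizers of the original problem are exactly the \<open>x\<close> with
  \<open>V\<^sub>1\<^sup>T x = G z\<^sub>0\<close>, and \<open>V\<^sub>1 G z\<^sub>0\<close> is the one of least norm because \<open>\<parallel>V\<^sub>1\<^sup>T y\<parallel> \<le> \<parallel>y\<parallel>\<close>.
\<close>

definition tikhonov :: "real^'n^'m \<Rightarrow> real^'n^'p \<Rightarrow> real \<Rightarrow> real^'m \<Rightarrow> real^'n \<Rightarrow> real" where
  "tikhonov M N \<mu> b x = (norm (M *v x - b))\<^sup>2 + \<mu>\<^sup>2 * (norm (N *v x))\<^sup>2"

lemma tikhonov_matrix_mul:
  "tikhonov M N \<mu> b (P *v x) = tikhonov (M ** P) (N ** P) \<mu> b x"
  by (simp add: tikhonov_def matrix_vector_mul_assoc)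

lemma matrix_inv_inverse:
  assumes "invertible (A::'a::semiring_1^'n^'n)"
  shows "A ** matrix_inv A = mat 1" "matrix_inv A ** A = mat 1"
proof -
  have "\<exists>A'. A ** A' = mat 1 \<and> A' ** A = mat 1"
    using assms unfolding invertible_def by blast
  from someI_ex[OF this] show "A ** matrix_inv A = mat 1" "matrix_inv A ** A = mat 1"
    unfolding matrix_inv_def by auto
qed

lemma inner_matrix_vector_mult:
  "inner ((Q::real^'a^'b) *v v) w = inner v (transpose Q *v w)"
  by (metis dot_lmul_matrix vector_transpose_matrix)

lemma orthonormal_cols_gram:
  assumes "orthonormal_cols U"
  shows "transpose (U ** C) ** (U ** C) = transpose C ** C"
  using assms unfolding orthonormal_cols_def
  by (metis matrix_mul_assoc matrix_mul_lid matrix_transpose_mul)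

lemma orthonormal_cols_inner:
  assumes "orthonormal_cols Q"
  shows "inner (Q *v v) (Q *v w) = inner v w"
  using assms unfolding orthonormal_cols_def
  by (simp add: inner_matrix_vector_mult matrix_vector_mul_assoc)

lemma orthonormal_cols_norm:
  assumes "orthonormal_cols Q"
  shows "norm (Q *v v) = norm v"
  using orthonormal_cols_inner[OF assms, of v v] by (simp add: norm_eq_sqrt_inner)

lemma orthonormal_cols_transpose_norm_le:
  assumes "orthonormal_cols Q"
  shows "norm (transpose Q *v y) \<le> norm y"
proof -
  have "(norm (transpose Q *v y))\<^sup>2 = inner y (Q *v (transpose Q *v y))"
    by (metis inner_matrix_vector_mult power2_norm_eq_inner transpose_transpose)
  also have "\<dots> \<le> norm y * norm (Q *v (transpose Q *v y))"
    by (rule Cauchy_Schwarz_ineq2[THEN order_trans[OF abs_ge_self]])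
  also have "\<dots> = norm y * norm (transpose Q *v y)"
    using orthonormal_cols_norm[OF assms] by simp
  finally show ?thesis
    by (metis mult_right_le_imp_le norm_ge_zero power2_eq_square order.order_iff_strict
        mult_zero_right linorder_not_le)
qed

lemma inner_regularized_gram:
  fixes C :: "real^'n^'m" and S :: "real^'n^'p"
  shows "inner w ((transpose C ** C + \<mu>\<^sup>2 *\<^sub>R (transpose S ** S)) *v w)
     = (norm (C *v w))\<^sup>2 + \<mu>\<^sup>2 * (norm (S *v w))\<^sup>2"
  by (simp add: matrix_vector_mult_add_rdistrib scaleR_matrix_vector_assoc[symmetric]
      matrix_vector_mul_assoc inner_add_right inner_matrix_vector_mult power2_norm_eq_inner)

lemma regularized_gram_definite:
  fixes C :: "real^'n^'m" and S :: "real^'n^'p"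
  assumes CS: "transpose C ** C + transpose S ** S = mat 1" and "\<mu> \<noteq> 0"
    and "(norm (C *v d))\<^sup>2 + \<mu>\<^sup>2 * (norm (S *v d))\<^sup>2 = 0"
  shows "d = 0"
proof -
  have "(norm (C *v d))\<^sup>2 = 0" "(norm (S *v d))\<^sup>2 = 0"
    using assms(2,3) by (simp_all add: add_nonneg_eq_0_iff)
  moreover have "(norm (C *v d))\<^sup>2 + (norm (S *v d))\<^sup>2 = (norm d)\<^sup>2"
    using inner_regularized_gram[of d C 1 S] CS by (simp add: power2_norm_eq_inner)
  ultimately show ?thesis by simp
qed

lemma invertible_regularized_gram:
  fixes C :: "real^'n^'m" and S :: "real^'n^'p"
  assumes "transpose C ** C + transpose S ** S = mat 1" and "\<mu> \<noteq> 0"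
  shows "invertible (transpose C ** C + \<mu>\<^sup>2 *\<^sub>R (transpose S ** S))"
proof -
  have "\<forall>w. (transpose C ** C + \<mu>\<^sup>2 *\<^sub>R (transpose S ** S)) *v w = 0 \<longrightarrow> w = 0"
    using regularized_gram_definite[OF assms] inner_regularized_gram by (metis inner_zero_right)
  then show ?thesis
    by (simp add: invertible_left_inverse matrix_left_invertible_ker)
qed

text \<open>Pythagoras for the normal equations: the cross term vanishes at a solution \<open>z\<close>.\<close>

lemma tikhonov_normal_equation_expansion:
  assumes "(transpose M ** M + \<mu>\<^sup>2 *\<^sub>R (transpose N ** N)) *v z = transpose M *v b"
  shows "tikhonov M N \<mu> b (z + d)
           = tikhonov M N \<mu> b z + ((norm (M *v d))\<^sup>2 + \<mu>\<^sup>2 * (norm (N *v d))\<^sup>2)"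
proof -
  have "inner (M *v d) (M *v z) + \<mu>\<^sup>2 * inner (N *v d) (N *v z) = inner (M *v d) b"
    using arg_cong[OF assms, of "inner d"]
    by (simp add: matrix_vector_mult_add_rdistrib scaleR_matrix_vector_assoc[symmetric]
        matrix_vector_mul_assoc[symmetric] inner_add_right inner_matrix_vector_mult)
  then show ?thesis
    unfolding tikhonov_def
    by (simp add: power2_norm_eq_inner matrix_vector_right_distrib inner_add_left inner_add_right
        inner_diff_left inner_diff_right inner_commute algebra_simps)
qed

lemma tikhonov_unique_minimizer:
  assumes normal: "(transpose M ** M + \<mu>\<^sup>2 *\<^sub>R (transpose N ** N)) *v z = transpose M *v b"
    and definite: "\<And>d. (norm (M *v d))\<^sup>2 + \<mu>\<^sup>2 * (norm (N *v d))\<^sup>2 = 0 \<Longrightarrow> d = 0"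
  shows "tikhonov M N \<mu> b z \<le> tikhonov M N \<mu> b w"
    and "tikhonov M N \<mu> b w \<le> tikhonov M N \<mu> b z \<Longrightarrow> w = z"
proof -
  have "0 \<le> (norm (M *v (w - z)))\<^sup>2 + \<mu>\<^sup>2 * (norm (N *v (w - z)))\<^sup>2" by simp
  moreover have "tikhonov M N \<mu> b w = tikhonov M N \<mu> b z
      + ((norm (M *v (w - z)))\<^sup>2 + \<mu>\<^sup>2 * (norm (N *v (w - z)))\<^sup>2)"
    using tikhonov_normal_equation_expansion[OF normal, of "w - z"] by simp
  ultimately show "tikhonov M N \<mu> b z \<le> tikhonov M N \<mu> b w"
    and "tikhonov M N \<mu> b w \<le> tikhonov M N \<mu> b z \<Longrightarrow> w = z"
    using definite[of "w - z"] by auto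
qed

lemma min_norm_minimizer_transpose_orthonormal_cols:
  fixes Q :: "real^'l^'n" and g :: "real^'l \<Rightarrow> real"
  assumes Q: "orthonormal_cols Q"
    and min: "\<And>w. g w\<^sub>0 \<le> g w" and unique: "\<And>w. g w \<le> g w\<^sub>0 \<Longrightarrow> w = w\<^sub>0"
  shows "min_norm_minimizer (\<lambda>x. g (transpose Q *v x)) (Q *v w\<^sub>0)"
proof -
  have Q_left_inverse: "transpose Q *v (Q *v w\<^sub>0) = w\<^sub>0"
    using Q by (simp add: orthonormal_cols_def matrix_vector_mul_assoc)
  have "norm (Q *v w\<^sub>0) \<le> norm y" if "\<forall>x. g (transpose Q *v y) \<le> g (transpose Q *v x)" for y
  proof -
    have "transpose Q *v y = w\<^sub>0"
      using unique that Q_left_inverse by metis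
    then show ?thesis
      using orthonormal_cols_norm[OF Q] orthonormal_cols_transpose_norm_le[OF Q] by metis
  qed
  then show ?thesis
    unfolding min_norm_minimizer_def using min Q_left_inverse by simp
qed

theorem lemma1:
  fixes A :: "real^'n^'m" and L :: "real^'n^'p" and b :: "real^'m" and \<mu> :: real
    and V1 :: "real^'l^'n"
    and U :: "real^'l^'m" and V :: "real^'l^'p"
    and C :: "real^'l^'l" and S :: "real^'l^'l" and G :: "real^'l^'l"
  assumes null: "\<forall>x. A *v x = 0 \<and> L *v x = 0 \<longrightarrow> x = 0"
    and mu: "\<mu> > 0"
    and V1_on: "orthonormal_cols V1"
    and U_on: "orthonormal_cols U"
    and V_on: "orthonormal_cols V"
    and C_diag: "nonneg_diag C"
    and S_diag: "nonneg_diag S"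
    and CS: "transpose C ** C + transpose S ** S = mat 1"
    and G_inv: "invertible G"
    and gsvd_A: "A ** V1 = U ** C ** matrix_inv G"
    and gsvd_L: "L ** V1 = V ** S ** matrix_inv G"
  shows "min_norm_minimizer
           (\<lambda>x. (norm ((A ** V1 ** transpose V1) *v x - b))\<^sup>2
                 + \<mu>\<^sup>2 * (norm ((L ** V1 ** transpose V1) *v x))\<^sup>2)
           ((V1 ** G ** matrix_inv (transpose C ** C + \<mu>\<^sup>2 *\<^sub>R (transpose S ** S))
                   ** transpose C ** transpose U) *v b)"
proof -
  define D where "D = transpose C ** C + \<mu>\<^sup>2 *\<^sub>R (transpose S ** S)"
  define z where "z = matrix_inv D *v (transpose (U ** C) *v b)"
  let ?f = "tikhonov (U ** C) (V ** S) \<mu> b"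
  have mu_nz: "\<mu> \<noteq> 0"
    using mu by simp
  have "invertible D"
    unfolding D_def using invertible_regularized_gram[OF CS mu_nz] .
  then have normal: "(transpose (U ** C) ** (U ** C) + \<mu>\<^sup>2 *\<^sub>R (transpose (V ** S) ** (V ** S))) *v z
                       = transpose (U ** C) *v b"
    by (simp add: orthonormal_cols_gram U_on V_on z_def D_def[symmetric] matrix_vector_mul_assoc
        matrix_inv_inverse)
  have z_min: "?f z \<le> ?f w" and z_unique: "?f w \<le> ?f z \<Longrightarrow> w = z" for w
    using tikhonov_unique_minimizer[OF normal] regularized_gram_definite[OF CS mu_nz]
    by (simp_all add: matrix_vector_mul_assoc[symmetric] orthonormal_cols_norm U_on V_on)
  have G_cancel: "matrix_inv G *v (G *v z) = z" "G *v (matrix_inv G *v w) = w" for w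
    by (simp_all add: matrix_vector_mul_assoc matrix_inv_inverse[OF G_inv])
  have "min_norm_minimizer (\<lambda>x. ?f (matrix_inv G *v (transpose V1 *v x))) (V1 *v (G *v z))"
  proof (rule min_norm_minimizer_transpose_orthonormal_cols[OF V1_on])
    show "?f (matrix_inv G *v (G *v z)) \<le> ?f (matrix_inv G *v w)" for w
      using z_min G_cancel by simp
    show "w = G *v z" if "?f (matrix_inv G *v w) \<le> ?f (matrix_inv G *v (G *v z))" for w
      using z_unique[OF that[unfolded G_cancel(1)]] G_cancel(2) by metis
  qed
  moreover have "?f (matrix_inv G *v (transpose V1 *v x))
      = tikhonov (A ** V1 ** transpose V1) (L ** V1 ** transpose V1) \<mu> b x" for x
    by (simp only: tikhonov_matrix_mul gsvd_A gsvd_L matrix_mul_assoc)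
  moreover have "(V1 ** G ** matrix_inv D ** transpose C ** transpose U) *v b = V1 *v (G *v z)"
    by (simp only: z_def matrix_transpose_mul matrix_vector_mul_assoc matrix_mul_assoc)
  ultimately show ?thesis
    unfolding tikhonov_def D_def by simp
qed

end
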